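(* (Quantum Minimax Theorem.) For every two-player zero-sum static quantum game (as defined in the context), with $P(\chi,\xi)=\sum_{\alpha,\beta,\gamma,\delta}\chi_{\alpha\beta}\xi_{\gamma\delta}A_{\alpha\beta\gamma\delta}$ the payoff of player I, $$\max_{\chi\in\Omega_{\mathrm{I}}}\min_{\xi\in\Omega_{\mathrm{II}}}P(\chi,\xi)=\min_{\xi\in\Omega_{\mathrm{II}}}\max_{\chi\in\Omega_{\mathrm{I}}}P(\chi,\xi).$$
   Context: A two-player static quantum game: each of two players receives $q$ qubits, $n=2^q$. The referee prepares a density matrix $\rho$ on $\mathbb{C}^n\otimes\mathbb{C}^n$, sends the first $q$ qubits to player I and the last $q$ to player II; each applies a trace-preserving completely positive map to their part and returns it; the referee measures with a POVM $\{M_m\}_{m=1}^L$ and awards player $k\in\{\mathrm{I},\mathrm{II}\}$ the amount $a^k_m\in\mathbb{R}$ on outcome $m$. The game is zero-sum if $a^{\mathrm{I}}_m=-a^{\mathrm{II}}_m$ for all $m$. Let $R=\sum_m a^{\mathrm{I}}_m M_m^\dagger M_m$. Fix a basis $\{\tilde E_\alpha\}_{\alpha=1}^{4^q}$ of the $n\times n$ complex matrices. A trace-preserving completely positive map with Kraus operators $E_j=\sum_\alpha e_{j\alpha}\tilde E_\alpha$ is represented by its chi matrix $\chi_{\alpha\beta}=\sum_j e_{j\alpha}\overline{e_{j\beta}}$. The strategy sets $\Omega_{\mathrm{I}}=\Omega_{\mathrm{II}}$ are the set of all $4^q\times4^q$ positive semidefinite Hermitian matrices $\chi$ with $\sum_{\alpha,\beta}\overline{\chi_{\alpha\beta}}\tilde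 E_\alpha^\dagger\tilde E_\beta=I$. The coefficients are $A_{\alpha\beta\gamma\delta}=\mathrm{tr}\big[R(\tilde E_\alpha\otimes\tilde E_\gamma)\rho(\tilde E_\beta^\dagger\otimes\tilde E_\delta^\dagger)\big]$; then $P(\chi,\xi)$ equals $\mathrm{tr}(R\pi)$ for the final state $\pi$ when player I plays $\chi$ and player II plays $\xi$, and it is real. *)

theory Defs
  imports "HOL-Analysis.Analysis"
begin

text \<open>The one-player space C^n is indexed by a finite type 'n with CARD('n) = 2^q;
  the two-player space C^n \<otimes> C^n is indexed by 'n \<times> 'n (first component = first q qubits,
  sent to player I).\<close>

definition adj :: "complex^'m^'n \<Rightarrow> complex^'n^'m" where
  "adj M = (\<chi> i j. cnj (M $ j $ i))"

definition kron :: "complex^'n^'n \<Rightarrow> complex^'n^'n \<Rightarrow> complex^('n \<times> 'n)^('n \<times> 'n)" where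
  "kron A B = (\<chi> p r. A $ fst p $ fst r * B $ snd p $ snd r)"

definition hermitian :: "complex^'n^'n \<Rightarrow> bool" where
  "hermitian M \<longleftrightarrow> adj M = M"

definition psd :: "complex^'n^'n \<Rightarrow> bool" where
  "psd M \<longleftrightarrow> (\<forall>x :: complex^'n. (\<Sum>i\<in>UNIV. cnj (x $ i) * (M *v x) $ i) \<in> \<real> \<and>
                   0 \<le> Re (\<Sum>i\<in>UNIV. cnj (x $ i) * (M *v x) $ i))"

definition density_matrix :: "complex^'n^'n \<Rightarrow> bool" where
  "density_matrix \<rho> \<longleftrightarrow> psd \<rho> \<and> trace \<rho> = 1"

definition povm :: "('o::finite \<Rightarrow> complex^'n^'n) \<Rightarrow> bool" where
  "povm M \<longleftrightarrow> (\<Sum>m\<in>UNIV. adj (M m) ** M m) = mat 1"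

definition matrix_basis :: "('b::finite \<Rightarrow> complex^'n^'n) \<Rightarrow> bool" where
  "matrix_basis E \<longleftrightarrow>
     (\<forall>c :: 'b \<Rightarrow> complex. (\<forall>i j. (\<Sum>a\<in>UNIV. c a * E a $ i $ j) = 0) \<longrightarrow> (\<forall>a. c a = 0)) \<and>
     (\<forall>X :: complex^'n^'n. \<exists>c :: 'b \<Rightarrow> complex. \<forall>i j. X $ i $ j = (\<Sum>a\<in>UNIV. c a * E a $ i $ j))"

definition payoff_op :: "('o::finite \<Rightarrow> real) \<Rightarrow> ('o \<Rightarrow> complex^'n^'n) \<Rightarrow> complex^'n^'n" where
  "payoff_op a M = (\<Sum>m\<in>UNIV. (\<chi> i j. complex_of_real (a m) * (adj (M m) ** M m) $ i $ j))"

definition strategies :: "('b::finite \<Rightarrow> complex^'n^'n) \<Rightarrow> (complex^'b^'b) set" where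
  "strategies E = {X. psd X \<and> hermitian X \<and>
      (\<Sum>\<alpha>\<in>UNIV. \<Sum>\<beta>\<in>UNIV. (\<chi> i j. cnj (X $ \<alpha> $ \<beta>) * (adj (E \<alpha>) ** E \<beta>) $ i $ j)) = mat 1}"

definition coeffA ::
  "complex^('n \<times> 'n)^('n \<times> 'n) \<Rightarrow> complex^('n \<times> 'n)^('n \<times> 'n) \<Rightarrow> ('b::finite \<Rightarrow> complex^'n^'n)
     \<Rightarrow> 'b \<Rightarrow> 'b \<Rightarrow> 'b \<Rightarrow> 'b \<Rightarrow> complex" where
  "coeffA R \<rho> E \<alpha> \<beta> \<gamma> \<delta> =
     trace (R ** kron (E \<alpha>) (E \<gamma>) ** \<rho> ** kron (adj (E \<beta>)) (adj (E \<delta>)))"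

text \<open>P(\<chi>,\<xi>) = \<Sum> \<chi>_{\<alpha>\<beta>} \<xi>_{\<gamma>\<delta>} A_{\<alpha>\<beta>\<gamma>\<delta>} (a complex number, real on \<Omega> \<times> \<Omega>).\<close>
definition game_payoff ::
  "complex^('n \<times> 'n)^('n \<times> 'n) \<Rightarrow> complex^('n \<times> 'n)^('n \<times> 'n) \<Rightarrow> ('b::finite \<Rightarrow> complex^'n^'n)
     \<Rightarrow> complex^'b^'b \<Rightarrow> complex^'b^'b \<Rightarrow> complex" where
  "game_payoff R \<rho> E X Y =
     (\<Sum>\<alpha>\<in>UNIV. \<Sum>\<beta>\<in>UNIV. \<Sum>\<gamma>\<in>UNIV. \<Sum>\<delta>\<in>UNIV.
        X $ \<alpha> $ \<beta> * Y $ \<gamma> $ \<delta> * coeffA R \<rho> E \<alpha> \<beta> \<gamma> \<delta>)"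

end

theory Submission
  imports Defs
begin

(* The payoff P is real-bilinear in the two chi matrices and the strategy set \<Omega> is a nonempty
  compact convex subset of a Euclidean space, so the theorem is von Neumann's minimax theorem for
  bilinear forms. A saddle point is a fixed point, provided by Brouwer's theorem, of the projected
  gradient map (x, y) \<mapsto> (proj (x + grad_x P), proj (y - grad_y P)).
  \<Omega> is closed and convex, being cut out by positivity of the forms v^H \<chi> v, hermiticity and the
  affine trace-preservation condition. It is bounded because the Choi matrix of \<chi> depends linearly
  and injectively on \<chi>, and on \<Omega> its entries are values w^H \<chi> w' bounded by the diagonal ones,
  which are nonnegative and sum to n by trace preservation. It is nonempty: writing the identity
  as \<Sum> c\<^sub>\<alpha> E\<^sub>\<alpha>, the matrix c c^H is the chi matrix of the identity channel. *)

lemma linear_eq_inner_gradient: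
  fixes f :: "'a::euclidean_space \<Rightarrow> real"
  assumes "linear f"
  shows "f x = x \<bullet> (\<Sum>b\<in>Basis. f b *\<^sub>R b)"
proof -
  have "f x = f (\<Sum>b\<in>Basis. (x \<bullet> b) *\<^sub>R b)" by (simp only: euclidean_representation)
  also have "\<dots> = x \<bullet> (\<Sum>b\<in>Basis. f b *\<^sub>R b)"
    by (simp add: linear_sum[OF assms] linear_scale[OF assms] inner_sum_right mult.commute)
  finally show ?thesis .
qed

lemma linear_continuous_on_euclidean:
  fixes f :: "'a::euclidean_space \<Rightarrow> 'b::real_normed_vector"
  shows "linear f \<Longrightarrow> continuous_on S f"
  by (simp add: linear_conv_bounded_linear linear_continuous_on)

lemma bilinear_saddle_point:
  fixes P :: "'a::euclidean_space \<Rightarrow> 'b::euclidean_space \<Rightarrow> real"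
  assumes K: "compact K" "convex K" "K \<noteq> {}" and L: "compact L" "convex L" "L \<noteq> {}"
    and lin_left: "\<And>y. linear (\<lambda>x. P x y)" and lin_right: "\<And>x. linear (\<lambda>y. P x y)"
  obtains x0 y0 where "x0 \<in> K" "y0 \<in> L"
    "\<And>x. x \<in> K \<Longrightarrow> P x y0 \<le> P x0 y0" "\<And>y. y \<in> L \<Longrightarrow> P x0 y0 \<le> P x0 y"
proof -
  have clK: "closed K" and clL: "closed L"
    using K L by (simp_all add: compact_imp_closed)
  define G where "G y = (\<Sum>b\<in>Basis. P b y *\<^sub>R b)" for y
  define H where "H x = (\<Sum>b\<in>Basis. P x b *\<^sub>R b)" for x
  have PG: "P x y = x \<bullet> G y" for x y
    unfolding G_def by (rule linear_eq_inner_gradient[OF lin_left])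
  have PH: "P x y = y \<bullet> H x" for x y
    unfolding H_def by (rule linear_eq_inner_gradient[OF lin_right])
  have cG: "continuous_on UNIV G" and cH: "continuous_on UNIV H"
    unfolding G_def H_def
    by (intro continuous_intros linear_continuous_on_euclidean lin_left lin_right)+
  define F where
    "F z = (closest_point K (fst z + G (snd z)), closest_point L (snd z - H (fst z)))" for z
  have contF: "continuous_on (K \<times> L) F"
    unfolding F_def
    using K L clK clL
    by (intro continuous_on_Pair continuous_on_compose2[OF continuous_on_closest_point _ subset_UNIV]
        continuous_intros continuous_on_compose2[OF cG _ subset_UNIV]
        continuous_on_compose2[OF cH _ subset_UNIV])
      auto
  have Fim: "F \<in> K \<times> L \<rightarrow> K \<times> L"
    unfolding F_def using closest_point_in_set[OF clK K(3)] closest_point_in_set[OF clL L(3)] by auto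
  obtain z where "z \<in> K \<times> L" "F z = z"
    using brouwer[OF compact_Times[OF K(1) L(1)] convex_Times[OF K(2) L(2)] _ contF Fim] K(3) L(3)
    by blast
  then obtain x0 y0 where "x0 \<in> K" "y0 \<in> L" "F (x0, y0) = (x0, y0)"
    by (cases z) auto
  then have fix_x: "closest_point K (x0 + G y0) = x0" and fix_y: "closest_point L (y0 - H x0) = y0"
    by (auto simp: F_def)
  show thesis
  proof
    show "P x y0 \<le> P x0 y0" if "x \<in> K" for x
      using closest_point_dot[OF K(2) clK that, of "x0 + G y0"]
      by (simp add: fix_x PG inner_diff_right inner_commute)
    show "P x0 y0 \<le> P x0 y" if "y \<in> L" for y
      using closest_point_dot[OF L(2) clL that, of "y0 - H x0"]
      by (simp add: fix_y PH inner_diff_right inner_commute)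
  qed fact+
qed

lemma saddle_point_minimax:
  fixes P :: "'a \<Rightarrow> 'b \<Rightarrow> real"
  assumes x0: "x0 \<in> K" and y0: "y0 \<in> L"
    and saddle_x: "\<And>x. x \<in> K \<Longrightarrow> P x y0 \<le> P x0 y0"
    and saddle_y: "\<And>y. y \<in> L \<Longrightarrow> P x0 y0 \<le> P x0 y"
    and bdd_y: "\<And>x. x \<in> K \<Longrightarrow> bdd_below ((\<lambda>y. P x y) ` L)"
    and bdd_x: "\<And>y. y \<in> L \<Longrightarrow> bdd_above ((\<lambda>x. P x y) ` K)"
  shows "(\<forall>x\<in>K. (INF y\<in>L. P x y) \<le> (INF y\<in>L. P x0 y))"
    and "(\<forall>y\<in>L. (SUP x\<in>K. P x y0) \<le> (SUP x\<in>K. P x y))"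
    and "(SUP x\<in>K. INF y\<in>L. P x y) = (INF y\<in>L. SUP x\<in>K. P x y)"
proof -
  have inf_x0: "(INF y\<in>L. P x0 y) = P x0 y0"
    using y0 saddle_y by (intro cInf_eq_minimum) auto
  have sup_y0: "(SUP x\<in>K. P x y0) = P x0 y0"
    using x0 saddle_x by (intro cSup_eq_maximum) auto
  have inf_le: "(INF y\<in>L. P x y) \<le> P x0 y0" if "x \<in> K" for x
    using cINF_lower[OF bdd_y[OF that] y0] saddle_x[OF that] by linarith
  have sup_ge: "P x0 y0 \<le> (SUP x\<in>K. P x y)" if "y \<in> L" for y
    using cSUP_upper[OF x0 bdd_x[OF that]] saddle_y[OF that] by linarith
  show "\<forall>x\<in>K. (INF y\<in>L. P x y) \<le> (INF y\<in>L. P x0 y)"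
    using inf_le by (simp add: inf_x0)
  show "\<forall>y\<in>L. (SUP x\<in>K. P x y0) \<le> (SUP x\<in>K. P x y)"
    using sup_ge by (simp add: sup_y0)
  have "(SUP x\<in>K. INF y\<in>L. P x y) = P x0 y0"
    using x0 inf_le by (intro cSup_eq_maximum) (auto simp flip: inf_x0)
  moreover have "(INF y\<in>L. SUP x\<in>K. P x y) = P x0 y0"
    using y0 sup_ge by (intro cInf_eq_minimum) (auto simp flip: sup_y0)
  ultimately show "(SUP x\<in>K. INF y\<in>L. P x y) = (INF y\<in>L. SUP x\<in>K. P x y)"
    by simp
qed

theorem bilinear_minimax:
  fixes P :: "'a::euclidean_space \<Rightarrow> 'b::euclidean_space \<Rightarrow> real"
  assumes K: "compact K" "convex K" "K \<noteq> {}" and L: "compact L" "convex L" "L \<noteq> {}"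
    and lin_left: "\<And>y. linear (\<lambda>x. P x y)" and lin_right: "\<And>x. linear (\<lambda>y. P x y)"
  shows "(\<forall>x\<in>K. \<exists>y\<in>L. \<forall>y'\<in>L. P x y \<le> P x y')
       \<and> (\<forall>y\<in>L. \<exists>x\<in>K. \<forall>x'\<in>K. P x' y \<le> P x y)
       \<and> (\<exists>x0\<in>K. \<forall>x\<in>K. (INF y\<in>L. P x y) \<le> (INF y\<in>L. P x0 y))
       \<and> (\<exists>y0\<in>L. \<forall>y\<in>L. (SUP x\<in>K. P x y0) \<le> (SUP x\<in>K. P x y))
       \<and> (SUP x\<in>K. INF y\<in>L. P x y) = (INF y\<in>L. SUP x\<in>K. P x y)"
proof -
  have cont_left: "continuous_on K (\<lambda>x. P x y)" for y
    by (rule linear_continuous_on_euclidean[OF lin_left])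
  have cont_right: "continuous_on L (\<lambda>y. P x y)" for x
    by (rule linear_continuous_on_euclidean[OF lin_right])
  obtain x0 y0 where saddle: "x0 \<in> K" "y0 \<in> L"
    "\<And>x. x \<in> K \<Longrightarrow> P x y0 \<le> P x0 y0" "\<And>y. y \<in> L \<Longrightarrow> P x0 y0 \<le> P x0 y"
    using bilinear_saddle_point[OF K L lin_left lin_right] by blast
  have bdd_y: "bdd_below ((\<lambda>y. P x y) ` L)" for x
    by (intro bounded_imp_bdd_below compact_imp_bounded compact_continuous_image cont_right L(1))
  have bdd_x: "bdd_above ((\<lambda>x. P x y) ` K)" for y
    by (intro bounded_imp_bdd_above compact_imp_bounded compact_continuous_image cont_left K(1))
  show ?thesis
    using continuous_attains_inf[OF L(1) L(3) cont_right]
      continuous_attains_sup[OF K(1) K(3) cont_left] saddle_point_minimax[OF saddle bdd_y bdd_x] saddle(1,2)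
    by blast
qed

definition sesq_form :: "complex^'n^'n \<Rightarrow> complex^'n \<Rightarrow> complex^'n \<Rightarrow> complex" where
  "sesq_form X v w = (\<Sum>i\<in>UNIV. cnj (v $ i) * (X *v w) $ i)"

lemma psd_iff_sesq_form: "psd X \<longleftrightarrow> (\<forall>x. sesq_form X x x \<in> \<real>\<^sub>\<ge>\<^sub>0)"
  unfolding psd_def sesq_form_def by (auto simp: complex_nonneg_Reals_iff complex_is_Real_iff)

lemma sesq_form_hermitian:
  assumes "hermitian X"
  shows "sesq_form X w v = cnj (sesq_form X v w)"
proof -
  have X: "cnj (X $ i $ j) = X $ j $ i" for i j
    using assms unfolding hermitian_def adj_def by (metis vec_lambda_beta)
  have "cnj (sesq_form X v w) = (\<Sum>i\<in>UNIV. \<Sum>j\<in>UNIV. v $ i * X $ j $ i * cnj (w $ j))"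
    by (simp add: sesq_form_def matrix_vector_mult_def sum_distrib_left X algebra_simps)
  also have "\<dots> = sesq_form X w v"
    by (subst sum.swap) (simp add: sesq_form_def matrix_vector_mult_def sum_distrib_left algebra_simps)
  finally show ?thesis by simp
qed

lemma sesq_form_add_scaled:
  "sesq_form X (v + s *s w) (v + s *s w) =
     sesq_form X v v + s * sesq_form X v w + cnj s * sesq_form X w v + cnj s * s * sesq_form X w w"
  by (simp add: sesq_form_def matrix_vector_mult_def algebra_simps sum.distrib sum_distrib_left)

lemma psd_sesq_form_bound:
  assumes "psd X" "hermitian X"
  shows "2 * cmod (sesq_form X v w) \<le> Re (sesq_form X v v) + Re (sesq_form X w w)"
proof -
  define \<beta> where "\<beta> = sesq_form X v w"
  \<comment> \<open>the phase of s turns the cross terms of the form at v + s w into -2 |\<beta>|\<close>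
  define s where "s = - cnj (sgn \<beta>)"
  have nonneg: "0 \<le> Re (sesq_form X x x)" for x
    using assms(1) by (simp add: psd_iff_sesq_form complex_nonneg_Reals_iff)
  have s_\<beta>: "s * \<beta> = - of_real (cmod \<beta>)"
  proof (cases "\<beta> = 0")
    case False
    then show ?thesis
      by (simp add: s_def sgn_div_norm scaleR_conv_of_real field_simps
          complex_norm_square[symmetric] power2_eq_square)
  qed (simp add: s_def)
  have s_sq: "cnj s * s = of_real ((cmod s)\<^sup>2)"
    by (metis complex_norm_square mult.commute)
  have "cmod s \<le> 1"
    by (simp add: s_def norm_sgn)
  then have s_sq_le: "(cmod s)\<^sup>2 \<le> 1"
    by (simp add: power_le_one)
  have "0 \<le> Re (sesq_form X (v + s *s w) (v + s *s w))"
    by (rule nonneg)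
  also have "\<dots> = Re (sesq_form X v v + (s * \<beta> + cnj (s * \<beta>)) + cnj s * s * sesq_form X w w)"
    by (simp only: sesq_form_add_scaled sesq_form_hermitian[OF assms(2), of w v] complex_cnj_mult
        \<beta>_def add.assoc)
  also have "\<dots> = Re (sesq_form X v v) - 2 * cmod \<beta> + (cmod s)\<^sup>2 * Re (sesq_form X w w)"
    by (simp add: s_\<beta> s_sq)
  also have "\<dots> \<le> Re (sesq_form X v v) - 2 * cmod \<beta> + Re (sesq_form X w w)"
    using s_sq_le nonneg[of w] by (simp add: mult_left_le_one_le)
  finally show ?thesis by (simp add: \<beta>_def)
qed

definition completeness_sum :: "('b::finite \<Rightarrow> complex^'n^'n) \<Rightarrow> complex^'b^'b \<Rightarrow> complex^'n^'n" where
  "completeness_sum E X =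
     (\<Sum>\<alpha>\<in>UNIV. \<Sum>\<beta>\<in>UNIV. (\<chi> i j. cnj (X $ \<alpha> $ \<beta>) * (adj (E \<alpha>) ** E \<beta>) $ i $ j))"

lemma strategies_eq_Int_vimage:
  "strategies E = (\<Inter>x. (\<lambda>X. sesq_form X x x) -` \<real>\<^sub>\<ge>\<^sub>0) \<inter> (\<lambda>X. adj X - X) -` {0}
     \<inter> completeness_sum E -` {mat 1}"
  unfolding strategies_def psd_iff_sesq_form hermitian_def completeness_sum_def by auto

lemma convex_nonneg_Reals_complex: "convex (\<real>\<^sub>\<ge>\<^sub>0 :: complex set)"
  unfolding convex_def by (auto simp: complex_nonneg_Reals_iff)

lemma scaleR_complex: "r *\<^sub>R (z::complex) = of_real r * z"
  by (simp add: scaleR_conv_of_real)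

lemma linear_sesq_form: "linear (\<lambda>X. sesq_form X v w)"
  by (rule linearI)
    (simp_all add: sesq_form_def matrix_vector_mult_def sum.distrib sum_distrib_left
      scaleR_complex algebra_simps)

lemma linear_adj: "linear adj"
  by (rule linearI) (simp_all add: adj_def vec_eq_iff scaleR_complex)

lemma linear_completeness_sum: "linear (completeness_sum E)"
  by (rule linearI)
    (simp_all add: completeness_sum_def vec_eq_iff sum.distrib sum_distrib_left
      scaleR_complex algebra_simps)

lemma convex_strategies: "convex (strategies E)"
  unfolding strategies_eq_Int_vimage
  by (intro convex_Int convex_INT convex_linear_vimage linear_sesq_form linear_completeness_sum
      linear_compose_sub linear_adj linear_ident convex_nonneg_Reals_complex convex_singleton)

lemma closed_strategies: "closed (strategies E)"
  unfolding strategies_eq_Int_vimage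
  by (intro closed_Int closed_INT closed_vimage ballI linear_continuous_on_euclidean linear_sesq_form
      linear_completeness_sum linear_compose_sub linear_adj linear_ident
      closed_nonneg_Reals_complex closed_singleton)

(* The Choi matrix \<Sum> X\<^sub>\<alpha>\<^sub>\<beta> vec(E\<^sub>\<alpha>) vec(E\<^sub>\<beta>)^H of the channel with chi matrix X,
  where vec(A) is indexed by (row, column). *)
definition choi :: "('b::finite \<Rightarrow> complex^'n^'n) \<Rightarrow> complex^'b^'b \<Rightarrow> complex^('n \<times> 'n)^('n \<times> 'n)" where
  "choi E X = (\<chi> m m'. \<Sum>\<alpha>\<in>UNIV. \<Sum>\<beta>\<in>UNIV.
     E \<alpha> $ fst m $ snd m * X $ \<alpha> $ \<beta> * cnj (E \<beta> $ fst m' $ snd m'))"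

definition conj_entries :: "('b::finite \<Rightarrow> complex^'n^'n) \<Rightarrow> 'n \<times> 'n \<Rightarrow> complex^'b" where
  "conj_entries E m = (\<chi> \<alpha>. cnj (E \<alpha> $ fst m $ snd m))"

lemma choi_eq_sesq_form: "choi E X $ m $ m' = sesq_form X (conj_entries E m) (conj_entries E m')"
  by (simp add: choi_def sesq_form_def conj_entries_def matrix_vector_mult_def sum_distrib_left
      algebra_simps)

lemma linear_choi: "linear (choi E)"
  by (rule linearI) (simp_all add: choi_def vec_eq_iff sum.distrib sum_distrib_left scaleR_complex
      algebra_simps)

lemma trace_choi: "trace (choi E X) = cnj (trace (completeness_sum E X))"
proof -
  let ?f = "\<lambda>k i \<alpha> \<beta>. X $ \<alpha> $ \<beta> * E \<alpha> $ k $ i * cnj (E \<beta> $ k $ i)"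
  have "trace (choi E X) = (\<Sum>k\<in>UNIV. \<Sum>i\<in>UNIV. \<Sum>\<alpha>\<in>UNIV. \<Sum>\<beta>\<in>UNIV. ?f k i \<alpha> \<beta>)"
    by (simp only: trace_def choi_def vec_lambda_beta UNIV_Times_UNIV[symmetric] sum.cartesian_product'
        fst_conv snd_conv mult_ac)
  also have "\<dots> = (\<Sum>i\<in>UNIV. \<Sum>\<alpha>\<in>UNIV. \<Sum>\<beta>\<in>UNIV. \<Sum>k\<in>UNIV. ?f k i \<alpha> \<beta>)"
    by (subst sum.swap, rule sum.cong[OF refl], subst sum.swap, rule sum.cong[OF refl], rule sum.swap)
  also have "\<dots> = cnj (trace (completeness_sum E X))"
    by (simp add: trace_def completeness_sum_def sum_component matrix_matrix_mult_def adj_def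
        sum_distrib_left mult_ac)
  finally show ?thesis .
qed

lemma choi_eq_0_imp_eq_0:
  assumes "matrix_basis E" "choi E X = 0"
  shows "X = 0"
proof -
  have indep: "\<And>c. (\<forall>i j. (\<Sum>\<alpha>\<in>UNIV. c \<alpha> * E \<alpha> $ i $ j) = 0) \<Longrightarrow> \<forall>\<alpha>. c \<alpha> = 0"
    using assms(1) unfolding matrix_basis_def by blast
  have row: "(\<Sum>\<beta>\<in>UNIV. X $ \<alpha> $ \<beta> * cnj (E \<beta> $ i' $ j')) = 0" for \<alpha> i' j'
  proof -
    have "(\<Sum>\<alpha>\<in>UNIV. (\<Sum>\<beta>\<in>UNIV. X $ \<alpha> $ \<beta> * cnj (E \<beta> $ i' $ j')) * E \<alpha> $ i $ j) = 0" for i j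
      using arg_cong[OF assms(2), of "\<lambda>J. J $ (i, j) $ (i', j')"]
      by (simp add: choi_def sum_distrib_left sum_distrib_right mult_ac)
    then show ?thesis
      using indep[of "\<lambda>\<alpha>. \<Sum>\<beta>\<in>UNIV. X $ \<alpha> $ \<beta> * cnj (E \<beta> $ i' $ j')"] by blast
  qed
  have "cnj (X $ \<alpha> $ \<beta>) = 0" for \<alpha> \<beta>
  proof -
    have "(\<Sum>\<beta>\<in>UNIV. cnj (X $ \<alpha> $ \<beta>) * E \<beta> $ i $ j) = 0" for i j
      using arg_cong[OF row[of \<alpha> i j], of cnj] by (simp add: cnj_sum)
    then show ?thesis
      using indep[of "\<lambda>\<beta>. cnj (X $ \<alpha> $ \<beta>)"] by blast
  qed
  then show ?thesis
    by (simp add: vec_eq_iff)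
qed

lemma norm_choi_entry_le:
  fixes E :: "'b::finite \<Rightarrow> complex^'n::finite^'n"
  assumes "X \<in> strategies E"
  shows "cmod (choi E X $ m $ m') \<le> CARD('n)"
proof -
  have psd: "psd X" and herm: "hermitian X" and tp: "completeness_sum E X = mat 1"
    using assms unfolding strategies_def completeness_sum_def by auto
  have diag_nonneg: "0 \<le> Re (choi E X $ k $ k)" for k
    using psd by (simp add: choi_eq_sesq_form psd_iff_sesq_form complex_nonneg_Reals_iff)
  have "trace (choi E X) = of_nat CARD('n)"
    by (simp add: trace_choi tp trace_I)
  then have "(\<Sum>k\<in>UNIV. Re (choi E X $ k $ k)) = CARD('n)"
    unfolding trace_def by (metis Re_sum Re_complex_of_real of_real_of_nat_eq)
  then have diag_le: "Re (choi E X $ k $ k) \<le> CARD('n)" for k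
    using member_le_sum[of k UNIV "\<lambda>k. Re (choi E X $ k $ k)"] diag_nonneg by simp
  have "2 * cmod (choi E X $ m $ m') \<le> Re (choi E X $ m $ m) + Re (choi E X $ m' $ m')"
    using psd_sesq_form_bound[OF psd herm] by (simp add: choi_eq_sesq_form)
  then show ?thesis
    using diag_le[of m] diag_le[of m'] by linarith
qed

lemma bounded_strategies:
  fixes E :: "'b::finite \<Rightarrow> complex^'n::finite^'n"
  assumes "matrix_basis E"
  shows "bounded (strategies E)"
proof -
  obtain e where e: "e > 0" "\<And>X. e * norm X \<le> norm (choi E X)"
    using injective_imp_isometric[of UNIV "choi E"] linear_choi choi_eq_0_imp_eq_0[OF assms]
    by (auto simp: linear_conv_bounded_linear)
  define C where "C = norm (\<chi> m m'. of_nat CARD('n) :: complex^('n \<times> 'n)^('n \<times> 'n))"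
  have "norm X \<le> C / e" if "X \<in> strategies E" for X
  proof -
    have "norm (choi E X) \<le> C"
      unfolding C_def
      by (intro norm_le_componentwise_cart) (simp add: norm_choi_entry_le[OF that])
    then show ?thesis
      using e(2)[of X] e(1) by (simp add: field_simps)
  qed
  then show ?thesis
    unfolding bounded_iff by blast
qed

lemma completeness_sum_rank_one:
  assumes "A = (\<chi> k i. \<Sum>\<alpha>\<in>UNIV. c \<alpha> * E \<alpha> $ k $ i)"
  shows "completeness_sum E (\<chi> \<alpha> \<beta>. c \<alpha> * cnj (c \<beta>)) = adj A ** A"
proof -
  have "completeness_sum E (\<chi> \<alpha> \<beta>. c \<alpha> * cnj (c \<beta>)) $ i $ j = (adj A ** A) $ i $ j" for i j
  proof -
    have "completeness_sum E (\<chi> \<alpha> \<beta>. c \<alpha> * cnj (c \<beta>)) $ i $ j =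
      (\<Sum>\<alpha>\<in>UNIV. \<Sum>\<beta>\<in>UNIV. \<Sum>k\<in>UNIV. cnj (c \<alpha> * E \<alpha> $ k $ i) * (c \<beta> * E \<beta> $ k $ j))"
      by (simp add: completeness_sum_def sum_component matrix_matrix_mult_def adj_def
          sum_distrib_left mult_ac)
    also have "\<dots> = (\<Sum>k\<in>UNIV. \<Sum>\<alpha>\<in>UNIV. \<Sum>\<beta>\<in>UNIV. cnj (c \<alpha> * E \<alpha> $ k $ i) * (c \<beta> * E \<beta> $ k $ j))"
      by (subst sum.swap, rule sum.cong[OF refl], rule sum.swap)
    also have "\<dots> = (adj A ** A) $ i $ j"
      by (simp add: assms matrix_matrix_mult_def adj_def sum_product)
    finally show ?thesis .
  qed
  then show ?thesis
    by (simp add: vec_eq_iff)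
qed

lemma strategies_nonempty:
  fixes E :: "'b::finite \<Rightarrow> complex^'n::finite^'n"
  assumes "matrix_basis E"
  shows "strategies E \<noteq> {}"
proof -
  obtain c where "\<forall>k i. (mat 1 :: complex^'n^'n) $ k $ i = (\<Sum>\<alpha>\<in>UNIV. c \<alpha> * E \<alpha> $ k $ i)"
    using assms unfolding matrix_basis_def by blast
  then have c: "(\<chi> k i. \<Sum>\<alpha>\<in>UNIV. c \<alpha> * E \<alpha> $ k $ i) = mat 1"
    by (simp add: vec_eq_iff)
  define X where "X = (\<chi> \<alpha> \<beta>. c \<alpha> * cnj (c \<beta>))"
  have adj_1: "adj (mat 1 :: complex^'n^'n) = mat 1"
    by (auto simp: adj_def mat_def vec_eq_iff)
  have "sesq_form X x x = (\<Sum>\<alpha>\<in>UNIV. cnj (x $ \<alpha>) * c \<alpha>) * cnj (\<Sum>\<alpha>\<in>UNIV. cnj (x $ \<alpha>) * c \<alpha>)"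
    for x
    unfolding X_def sesq_form_def matrix_vector_mult_def cnj_sum sum_product
    by (simp add: sum_distrib_left mult_ac)
  then have "psd X"
    unfolding psd_iff_sesq_form by (metis complex_norm_square nonneg_Reals_of_real_iff zero_le_power2)
  moreover have "hermitian X"
    by (simp add: hermitian_def adj_def X_def vec_eq_iff mult.commute)
  moreover have "completeness_sum E X = mat 1"
    by (simp add: X_def completeness_sum_rank_one[OF c[symmetric]] adj_1 matrix_mul_lid)
  ultimately have "X \<in> strategies E"
    unfolding strategies_def completeness_sum_def by blast
  then show ?thesis
    by blast
qed

lemma linear_game_payoff_left: "linear (\<lambda>X. Re (game_payoff R \<rho> E X Y))"
proof -
  have "linear (\<lambda>X. game_payoff R \<rho> E X Y)"
    by (rule linearI)
      (simp_all add: game_payoff_def sum.distrib sum_distrib_left scaleR_complex algebra_simps)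
  then show ?thesis
    using linear_compose[OF _ bounded_linear.linear[OF bounded_linear_Re]] by (simp add: o_def)
qed

lemma linear_game_payoff_right: "linear (\<lambda>Y. Re (game_payoff R \<rho> E X Y))"
proof -
  have "linear (\<lambda>Y. game_payoff R \<rho> E X Y)"
    by (rule linearI)
      (simp_all add: game_payoff_def sum.distrib sum_distrib_left scaleR_complex algebra_simps)
  then show ?thesis
    using linear_compose[OF _ bounded_linear.linear[OF bounded_linear_Re]] by (simp add: o_def)
qed

theorem theorem2:
  fixes q :: nat
    and \<rho> :: "complex^('n::finite \<times> 'n)^('n \<times> 'n)"
    and M :: "'o::finite \<Rightarrow> complex^('n \<times> 'n)^('n \<times> 'n)"
    and aI aII :: "'o \<Rightarrow> real"
    and E :: "'b::finite \<Rightarrow> complex^'n^'n"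
  defines "\<Omega> \<equiv> strategies E"
    and "P \<equiv> (\<lambda>x y. Re (game_payoff (payoff_op aI M) \<rho> E x y))"
  assumes n_qubits: "CARD('n) = 2 ^ q"
    and rho: "density_matrix \<rho>"
    and meas: "povm M"
    and zero_sum: "\<forall>m. aI m = - aII m"
    and basis: "matrix_basis E"
  shows "(\<forall>x\<in>\<Omega>. \<exists>y\<in>\<Omega>. \<forall>y'\<in>\<Omega>. P x y \<le> P x y')
       \<and> (\<forall>y\<in>\<Omega>. \<exists>x\<in>\<Omega>. \<forall>x'\<in>\<Omega>. P x' y \<le> P x y)
       \<and> (\<exists>x0\<in>\<Omega>. \<forall>x\<in>\<Omega>. (INF y\<in>\<Omega>. P x y) \<le> (INF y\<in>\<Omega>. P x0 y))
       \<and> (\<exists>y0\<in>\<Omega>. \<forall>y\<in>\<Omega>. (SUP x\<in>\<Omega>. P x y0) \<le> (SUP x\<in>\<Omega>. P x y))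
       \<and> (SUP x\<in>\<Omega>. INF y\<in>\<Omega>. P x y) = (INF y\<in>\<Omega>. SUP x\<in>\<Omega>. P x y)"
proof -
  have "compact \<Omega>"
    unfolding \<Omega>_def compact_eq_bounded_closed
    using bounded_strategies[OF basis] closed_strategies by blast
  moreover have "convex \<Omega>" "\<Omega> \<noteq> {}"
    unfolding \<Omega>_def by (rule convex_strategies, rule strategies_nonempty[OF basis])
  ultimately show ?thesis
    unfolding P_def
    by (intro bilinear_minimax linear_game_payoff_left linear_game_payoff_right)
qed

end
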